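(* Let $X$ be a simple act taking values $x_1,\dots,x_n$ in an outcome set $\mathcal{X}$ with probabilities $p_i>0$, $\sum_{i=1}^n p_i=1$, let $u:\mathcal{X}\to\mathbb{R}$ and $u_i=u(x_i)$, and let $\beta\in(-1,\infty)$. Define $v^{(0)}=\sum_{i=1}^n p_iu_i$ and, for $k=1,2,\dots$, $v^{(k)}=\sum_{i=1}^n\tilde p_i^{(k)}u_i$, where $w_i^{(k)}=p_i$ if $u_i\ge v^{(k-1)}$, $w_i^{(k)}=(1+\beta)p_i$ if $u_i<v^{(k-1)}$, and $\tilde p_i^{(k)}=w_i^{(k)}/\sum_{j=1}^n w_j^{(k)}$. Then the sequence $(v^{(k)})$ converges monotonically, in at most $n-1$ steps, to $\mathbb{E}_\beta[u(X)]$.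
   Context: $\mathbb{E}_\beta[u(X)]$ is the unique $v\in\mathbb{R}$ with $\mathbb{E}[(u(X)-v)^+]=(1+\beta)\mathbb{E}[(v-u(X))^+]$, i.e. $\sum_i p_i(u_i-v)^+=(1+\beta)\sum_ip_i(v-u_i)^+$. *)

theory Defs
  imports Complex_Main
begin

definition E_beta :: "nat \<Rightarrow> (nat \<Rightarrow> real) \<Rightarrow> (nat \<Rightarrow> real) \<Rightarrow> real \<Rightarrow> real" where
  "E_beta n p u \<beta> = (THE v. (\<Sum>i=1..n. p i * max (u i - v) 0)
                           = (1 + \<beta>) * (\<Sum>i=1..n. p i * max (v - u i) 0))"

definition iter_weight :: "(nat \<Rightarrow> real) \<Rightarrow> (nat \<Rightarrow> real) \<Rightarrow> real \<Rightarrow> real \<Rightarrow> nat \<Rightarrow> real" where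
  "iter_weight p u \<beta> v i = (if u i \<ge> v then p i else (1 + \<beta>) * p i)"

primrec v_iter :: "nat \<Rightarrow> (nat \<Rightarrow> real) \<Rightarrow> (nat \<Rightarrow> real) \<Rightarrow> real \<Rightarrow> nat \<Rightarrow> real" where
  "v_iter n p u \<beta> 0 = (\<Sum>i=1..n. p i * u i)"
| "v_iter n p u \<beta> (Suc k) =
     (\<Sum>i=1..n. (iter_weight p u \<beta> (v_iter n p u \<beta> k) i
                 / (\<Sum>j=1..n. iter_weight p u \<beta> (v_iter n p u \<beta> k) j)) * u i)"

end

theory Submission
  imports Defs
begin

text \<open>
  Write w_c for the weights chosen at a threshold c and m(c) for the w_c-weighted mean of
  the u_i, so that v(k+1) = m(v(k)). The defining equation of E_beta says D(v) = 0 for the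
  strictly decreasing function D(v) = sum_i w_v,i (u_i - v), and D(c) has the sign of
  m(c) - c; hence a fixed point of m is E_beta. Replacing the weights w_c by the
  self-consistent weights w_v changes sum_i w_i (u_i - v) by -beta times a nonnegative
  amount; at v = m(c) this shows that m(m(c)) - m(c) has the sign of -beta, whence
  monotonicity. Finally m(c) depends only on the set {i. u_i < c}. Along a monotone
  iteration that has not yet stopped these sets are pairwise distinct, nonempty and
  proper, and as they form a chain their cardinalities are distinct numbers in
  {1..n-1}, so the iteration stops after at most n - 1 steps.
\<close>

lemma mono_or_antimono_eq_between:
  fixes f :: "nat \<Rightarrow> 'a::order"
  assumes "mono f \<or> antimono f" and "a \<le> c" and "c \<le> b" and "f a = f b"
  shows "f c = f a"
  using assms(1)
proof
  assume "mono f"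
  then have "f a \<le> f c" and "f c \<le> f b"
    using assms(2,3) by (auto dest: monoD)
  then show ?thesis using assms(4) by simp
next
  assume "antimono f"
  then have "f c \<le> f a" and "f b \<le> f c"
    using assms(2,3) by (auto dest: antimonoD)
  then show ?thesis using assms(4) by simp
qed

declare v_iter.simps [simp del]

locale expectile_iteration =
  fixes n :: nat and p u :: "nat \<Rightarrow> real" and \<beta> :: real
  assumes p_pos: "\<forall>i\<in>{1..n}. p i > 0"
    and p_sum: "(\<Sum>i=1..n. p i) = 1"
    and beta_gt: "\<beta> > -1"
begin

abbreviation weight :: "real \<Rightarrow> nat \<Rightarrow> real" where
  "weight \<equiv> iter_weight p u \<beta>"

abbreviation V :: "nat \<Rightarrow> real" where
  "V \<equiv> v_iter n p u \<beta>"

definition weight_total :: "real \<Rightarrow> real" where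
  "weight_total c = (\<Sum>i=1..n. weight c i)"

definition reweighted_mean :: "real \<Rightarrow> real" where
  "reweighted_mean c = (\<Sum>i=1..n. weight c i * u i) / weight_total c"

definition deviation :: "real \<Rightarrow> real \<Rightarrow> real" where
  "deviation c v = (\<Sum>i=1..n. weight c i * (u i - v))"

definition lower_set :: "real \<Rightarrow> nat set" where
  "lower_set c = {i\<in>{1..n}. u i < c}"

lemma n_ge_1: "n \<ge> 1"
  using p_sum by (cases n) auto

lemma weight_pos: "i \<in> {1..n} \<Longrightarrow> weight c i > 0"
  using p_pos beta_gt by (auto simp: iter_weight_def)

lemma weight_total_pos: "weight_total c > 0"
  unfolding weight_total_def using weight_pos n_ge_1 by (intro sum_pos) auto

lemma v_iter_Suc: "V (Suc k) = reweighted_mean (V k)"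
  by (simp add: v_iter.simps reweighted_mean_def weight_total_def sum_divide_distrib)

lemma deviation_eq: "deviation c v = weight_total c * (reweighted_mean c - v)"
proof -
  have "deviation c v = (\<Sum>i=1..n. weight c i * u i) - v * weight_total c"
    unfolding deviation_def weight_total_def sum_distrib_left sum_subtractf[symmetric]
    by (rule sum.cong) (auto simp: algebra_simps)
  then show ?thesis
    using weight_total_pos[of c] by (simp add: reweighted_mean_def right_diff_distrib)
qed

lemma deviation_reweighted_mean: "deviation c (reweighted_mean c) = 0"
  by (simp add: deviation_eq)

lemma reweighting_term_sign:
  assumes "i \<in> {1..n}"
  shows "\<exists>d\<ge>0. (weight c i - weight v i) * (u i - v) = \<beta> * d"
proof
  let ?d = "if (u i \<ge> c) = (u i \<ge> v) then 0 else p i * \<bar>u i - v\<bar>"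
  have "p i > 0" using assms p_pos by auto
  then show "?d \<ge> 0 \<and> (weight c i - weight v i) * (u i - v) = \<beta> * ?d"
    by (auto simp: iter_weight_def algebra_simps abs_if)
qed

lemma deviation_reweighting_sign:
  "\<exists>D\<ge>0. deviation c v - deviation v v = \<beta> * D"
proof -
  have "\<forall>i\<in>{1..n}. \<exists>d\<ge>0. (weight c i - weight v i) * (u i - v) = \<beta> * d"
    using reweighting_term_sign by blast
  from bchoice[OF this] obtain d
    where d: "\<forall>i\<in>{1..n}. d i \<ge> 0 \<and> (weight c i - weight v i) * (u i - v) = \<beta> * d i"
    by blast
  have "deviation c v - deviation v v = (\<Sum>i=1..n. (weight c i - weight v i) * (u i - v))"
    by (simp add: deviation_def sum_subtractf left_diff_distrib)
  also have "\<dots> = \<beta> * (\<Sum>i=1..n. d i)"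
    by (simp add: sum_distrib_left d)
  finally show ?thesis
    using d by (intro exI[of _ "\<Sum>i=1..n. d i"]) (auto intro: sum_nonneg)
qed

lemma reweighted_mean_iterate_sign:
  "\<exists>D\<ge>0. reweighted_mean (reweighted_mean c) - reweighted_mean c = - \<beta> * D"
proof -
  define m where "m = reweighted_mean c"
  obtain D where "D \<ge> 0" and D: "deviation c m - deviation m m = \<beta> * D"
    using deviation_reweighting_sign by blast
  then have "weight_total m * (reweighted_mean m - m) = - \<beta> * D"
    by (simp add: m_def deviation_reweighted_mean deviation_eq)
  then have "reweighted_mean m - m = - \<beta> * (D / weight_total m)"
    using weight_total_pos[of m] by (simp add: field_simps)
  moreover have "D / weight_total m \<ge> 0"
    using \<open>D \<ge> 0\<close> weight_total_pos[of m] by simp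
  ultimately show ?thesis
    unfolding m_def by blast
qed

lemma weight_lower_set:
  "i \<in> {1..n} \<Longrightarrow> weight c i = (if i \<in> lower_set c then (1 + \<beta>) * p i else p i)"
  by (auto simp: iter_weight_def lower_set_def)

lemma reweighted_mean_lower_set_cong:
  assumes "lower_set c = lower_set c'"
  shows "reweighted_mean c = reweighted_mean c'"
proof -
  have "\<And>i. i \<in> {1..n} \<Longrightarrow> weight c i = weight c' i"
    using assms by (simp add: weight_lower_set)
  then show ?thesis
    by (simp add: reweighted_mean_def weight_total_def)
qed

lemma reweighted_mean_proportional:
  assumes "r > 0" and "\<And>i. i \<in> {1..n} \<Longrightarrow> weight c i = r * p i"
  shows "reweighted_mean c = V 0"
proof -
  have "reweighted_mean c = (r * (\<Sum>i=1..n. p i * u i)) / (r * (\<Sum>i=1..n. p i))"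
    by (simp add: reweighted_mean_def weight_total_def assms(2) sum_distrib_left mult.assoc)
  then show ?thesis
    using assms(1) p_sum by (simp add: v_iter.simps)
qed

lemma reweighted_mean_trivial_lower_set:
  assumes "lower_set c = {} \<or> lower_set c = {1..n}"
  shows "reweighted_mean c = V 0"
  using assms
proof
  assume "lower_set c = {}"
  then show ?thesis
    by (intro reweighted_mean_proportional[of 1]) (auto simp: weight_lower_set)
next
  assume "lower_set c = {1..n}"
  then show ?thesis
    using beta_gt by (intro reweighted_mean_proportional[of "1 + \<beta>"]) (auto simp: weight_lower_set)
qed

lemma v_iter_reweighted_mean: "\<exists>c. V k = reweighted_mean c"
proof (cases k)
  case 0
  have "lower_set (Min (u ` {1..n})) = {}"
    by (auto simp: lower_set_def)
  then show ?thesis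
    using 0 reweighted_mean_trivial_lower_set by metis
next
  case (Suc m)
  then show ?thesis by (auto simp: v_iter_Suc)
qed

lemma v_iter_mono_or_antimono: "mono V \<or> antimono V"
proof -
  have step: "\<exists>D\<ge>0. V (Suc k) - V k = - \<beta> * D" for k
    using v_iter_reweighted_mean[of k] reweighted_mean_iterate_sign by (auto simp: v_iter_Suc)
  show ?thesis
  proof (cases "\<beta> \<ge> 0")
    case True
    have "V (Suc k) \<le> V k" for k
    proof -
      obtain D where "D \<ge> 0" and "V (Suc k) - V k = - \<beta> * D" using step by blast
      moreover have "\<beta> * D \<ge> 0" using True \<open>D \<ge> 0\<close> by simp
      ultimately show ?thesis by simp
    qed
    then show ?thesis by (simp add: decseq_Suc_iff)
  next
    case False
    have "V k \<le> V (Suc k)" for k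
    proof -
      obtain D where "D \<ge> 0" and "V (Suc k) - V k = - \<beta> * D" using step by blast
      moreover have "\<beta> * D \<le> 0" using False \<open>D \<ge> 0\<close> by (simp add: mult_nonpos_nonneg)
      ultimately show ?thesis by simp
    qed
    then show ?thesis by (simp add: incseq_Suc_iff)
  qed
qed

lemma v_iter_stays_fixed:
  assumes "V (Suc k) = V k" and "k \<le> m"
  shows "V m = V k"
  using assms(2)
proof (induction m rule: dec_induct)
  case (step m)
  then show ?case
    using assms(1) by (simp add: v_iter_Suc)
qed simp

lemma deviation_strict_antimono:
  assumes "a < b"
  shows "deviation b b < deviation a a"
  unfolding deviation_def
proof (rule sum_strict_mono)
  show "{1..n} \<noteq> {}" using n_ge_1 by simp
  fix i assume "i \<in> {1..n}"
  then have "p i > 0" "(1 + \<beta>) * p i > 0" using p_pos beta_gt by auto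
  show "weight b i * (u i - b) < weight a i * (u i - a)"
  proof (cases "u i \<ge> b")
    case True
    then show ?thesis using assms \<open>p i > 0\<close> by (auto simp: iter_weight_def)
  next
    case False
    then have "weight b i * (u i - b) = (1 + \<beta>) * p i * (u i - b)"
      by (simp add: iter_weight_def)
    also have "\<dots> < weight a i * (u i - a)"
    proof (cases "u i \<ge> a")
      case True
      have "(1 + \<beta>) * p i * (u i - b) < 0"
        using \<open>(1 + \<beta>) * p i > 0\<close> \<open>\<not> u i \<ge> b\<close> by (simp add: mult_pos_neg)
      also have "0 \<le> weight a i * (u i - a)"
        using \<open>p i > 0\<close> True by (simp add: iter_weight_def)
      finally show ?thesis .
    next
      case False
      then show ?thesis
        using \<open>(1 + \<beta>) * p i > 0\<close> assms by (simp add: iter_weight_def mult_strict_left_mono)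
    qed
    finally show ?thesis .
  qed
qed simp

lemma deviation_self_eq:
  "deviation v v = (\<Sum>i=1..n. p i * max (u i - v) 0) - (1 + \<beta>) * (\<Sum>i=1..n. p i * max (v - u i) 0)"
proof -
  have "deviation v v = (\<Sum>i=1..n. p i * max (u i - v) 0 - (1 + \<beta>) * (p i * max (v - u i) 0))"
    unfolding deviation_def
    by (rule sum.cong) (auto simp: iter_weight_def max_def algebra_simps)
  then show ?thesis
    by (simp add: sum_subtractf sum_distrib_left)
qed

lemma E_beta_eqI:
  assumes "deviation v v = 0"
  shows "E_beta n p u \<beta> = v"
  unfolding E_beta_def
proof (rule the_equality)
  show "(\<Sum>i=1..n. p i * max (u i - v) 0) = (1 + \<beta>) * (\<Sum>i=1..n. p i * max (v - u i) 0)"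
    using assms by (simp add: deviation_self_eq)
next
  fix y
  assume "(\<Sum>i=1..n. p i * max (u i - y) 0) = (1 + \<beta>) * (\<Sum>i=1..n. p i * max (y - u i) 0)"
  then have "deviation y y = 0" by (simp add: deviation_self_eq)
  then show "y = v"
    using assms deviation_strict_antimono[of y v] deviation_strict_antimono[of v y]
    by (cases y v rule: linorder_cases) auto
qed

lemma lower_set_subset: "lower_set c \<subseteq> {1..n}"
  by (auto simp: lower_set_def)

lemma lower_set_finite: "finite (lower_set c)"
  using finite_subset[OF lower_set_subset] by simp

lemma lower_set_eq_if_card_eq:
  assumes "card (lower_set a) = card (lower_set b)"
  shows "lower_set a = lower_set b"
proof -
  have "lower_set a \<subseteq> lower_set b \<or> lower_set b \<subseteq> lower_set a"
    by (auto simp: lower_set_def)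
  then show ?thesis
  proof
    assume "lower_set a \<subseteq> lower_set b"
    from card_subset_eq[OF lower_set_finite this assms] show ?thesis .
  next
    assume "lower_set b \<subseteq> lower_set a"
    from card_subset_eq[OF lower_set_finite this assms[symmetric]] show ?thesis ..
  qed
qed

lemma v_iter_eq_between:
  assumes "j \<le> k" and "V j = V (Suc k)"
  shows "V (Suc k) = V k"
  using mono_or_antimono_eq_between[OF v_iter_mono_or_antimono, of j k "Suc k"] assms by simp

lemma card_lower_set_v_iter:
  assumes "V (Suc k) \<noteq> V k"
  shows "card (lower_set (V k)) \<in> {1..n - 1}"
proof -
  have "reweighted_mean (V k) \<noteq> V 0"
    using assms v_iter_eq_between[of 0 k] by (auto simp: v_iter_Suc)
  then have "lower_set (V k) \<noteq> {}" and "lower_set (V k) \<subset> {1..n}"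
    using reweighted_mean_trivial_lower_set[of "V k"] lower_set_subset[of "V k"] by auto
  then show ?thesis
    using lower_set_finite[of "V k"] psubset_card_mono[of "{1..n}" "lower_set (V k)"]
    by (auto simp: Suc_le_eq card_gt_0_iff)
qed

lemma lower_set_v_iter_distinct:
  assumes "j < k" and "V (Suc k) \<noteq> V k"
  shows "lower_set (V j) \<noteq> lower_set (V k)"
proof
  assume "lower_set (V j) = lower_set (V k)"
  then have "V (Suc j) = V (Suc k)"
    unfolding v_iter_Suc by (rule reweighted_mean_lower_set_cong)
  with assms show False
    using v_iter_eq_between[of "Suc j" k] by simp
qed

lemma v_iter_stops: "V n = V (n - 1)"
proof (rule ccontr)
  assume "V n \<noteq> V (n - 1)"
  have moving: "V (Suc k) \<noteq> V k" if "k \<le> n - 1" for k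
  proof
    assume "V (Suc k) = V k"
    then have "V n = V k" and "V (n - 1) = V k"
      using v_iter_stays_fixed[of k n] v_iter_stays_fixed[of k "n - 1"] that by simp_all
    with \<open>V n \<noteq> V (n - 1)\<close> show False by simp
  qed
  have "inj_on (\<lambda>k. card (lower_set (V k))) {0..n - 1}"
  proof (rule inj_onI)
    fix j k
    assume "j \<in> {0..n - 1}" and "k \<in> {0..n - 1}"
      and "card (lower_set (V j)) = card (lower_set (V k))"
    then show "j = k"
      using lower_set_eq_if_card_eq lower_set_v_iter_distinct[of j k] lower_set_v_iter_distinct[of k j]
        moving[of j] moving[of k]
      by (cases j k rule: linorder_cases) auto
  qed
  moreover have "(\<lambda>k. card (lower_set (V k))) ` {0..n - 1} \<subseteq> {1..n - 1}"
    using card_lower_set_v_iter moving by auto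
  ultimately have "card {0..n - 1} \<le> card {1..n - 1}"
    by (rule card_inj_on_le[OF _ _ finite_atLeastAtMost])
  then show False
    using n_ge_1 by simp
qed

end

theorem theorem7:
  fixes n :: nat and x :: "nat \<Rightarrow> 'x" and U :: "'x \<Rightarrow> real"
    and p :: "nat \<Rightarrow> real" and \<beta> :: real
  assumes "\<forall>i\<in>{1..n}. p i > 0"
    and "(\<Sum>i=1..n. p i) = 1"
    and "\<beta> > -1"
  shows "(mono (v_iter n p (\<lambda>i. U (x i)) \<beta>) \<or> antimono (v_iter n p (\<lambda>i. U (x i)) \<beta>))
       \<and> (\<forall>k\<ge>n - 1. v_iter n p (\<lambda>i. U (x i)) \<beta> k = E_beta n p (\<lambda>i. U (x i)) \<beta>)"
proof -
  interpret expectile_iteration n p "\<lambda>i. U (x i)" \<beta>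
    using assms by unfold_locales
  have fixed: "V (Suc (n - 1)) = V (n - 1)"
    using v_iter_stops n_ge_1 by simp
  then have "deviation (V (n - 1)) (V (n - 1)) = 0"
    by (simp add: deviation_eq v_iter_Suc)
  then have "E_beta n p (\<lambda>i. U (x i)) \<beta> = V (n - 1)"
    by (rule E_beta_eqI)
  then show ?thesis
    using v_iter_mono_or_antimono v_iter_stays_fixed[OF fixed] by metis
qed

end
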